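(* Consider the quadratic finite-horizon dynamic multi-agent system described in the context, with constants $\gamma,\alpha,\beta,\rho>0$ such that $\|\mathbf x_i(0)\|\le\gamma$, $\|\mathbf A_i\|\le\alpha$, $\|\mathbf B_i\|\le\beta$ and $\mathbf H_i\succeq\rho\mathbf I$ for all $i\in\mathcal V$, and assume $C(t)>0$ for all $t\in\mathcal T$. Let $\lambda^\dagger>0$ and let $\delta_{\max}>0$ satisfy $$\delta_{\max}\sum_{t=1}^{N}\gamma\,\alpha^{2t-1}\le\frac{\sqrt{C(0)\rho}}{n\beta}\lambda^\dagger,$$ and, for every $k\in\mathcal T$ with $k\neq0$, $$\delta_{\max}\sum_{t=k+1}^{N}\Big[\gamma\,\alpha^{2t-k-1}+\beta\sum_{j=0}^{k-1}\sqrt{\tfrac{C(j)}{\rho}}\;\alpha^{2t-j-k-2}\Big]\le\frac{\sqrt{C(k)\rho}}{n\beta}\lambda^\dagger.$$ Then for every choice of symmetric positive definite matrices $\mathbf Q_i,\mathbf R_i$ ($i\in\mathcal V$) with $\|\mathbf Q_i\|\le\delta_{\max}$, every competitive equilibrium $(\boldsymbol\lambda^\ast,\mathbf U^\ast,\mathbf E^\ast)$ satisfies $\lambda^\ast_t\le\lambda^\dagger$ for all $t\in\mathcal T$.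
   Context: Finite-horizon dynamic multi-agent system: $n$ agents $\mathcal V=\{1,\dots,n\}$, horizon $N\ge1$, $\mathcal T=\{0,\dots,N-1\}$. Agent $i$ has state $\mathbf x_i(t)\in\mathbb R^d$, input $\mathbf u_i(t)\in\mathbb R^m$, dynamics $\mathbf x_i(t+1)=\mathbf A_i\mathbf x_i(t)+\mathbf B_i\mathbf u_i(t)$ with given $\mathbf x_i(0)$, excess resource $a_i(t)\in\mathbb R$, and $C(t)=\sum_{i=1}^na_i(t)$. Quadratic case: agent $i$'s parameter is $\theta_i=(\mathbf Q_i,\mathbf R_i)$ with $\mathbf Q_i\in\mathbb R^{d\times d}$, $\mathbf R_i\in\mathbb R^{m\times m}$ symmetric positive definite; running utility $f(\mathbf x,\mathbf u;\theta_i)=-\mathbf x^\top\mathbf Q_i\mathbf x-\mathbf u^\top\mathbf R_i\mathbf u$; terminal utility $\phi(\mathbf x;\theta_i)=-\mathbf x^\top\mathbf Q_i\mathbf x$; consumption $h_i(\mathbf u)=\mathbf u^\top\mathbf H_i\mathbf u$ with $\mathbf H_i$ symmetric positive definite. Norms are Euclidean / induced operator norms. A competitive equilibrium is a triple $(\boldsymbol\lambda^\ast,\mathbf U^\ast,\mathbf E^\ast)$, $\boldsymbol\lambda^\ast=(\lambda^\ast_0,\dots,\lambda^\ast_{N-1})\in\mathbb R^N$, such that (i) for each $i\in\mathcal V$, $(\mathbf U_i^\ast,\mathbf E_i^\ast)=((\mathbf u_i^\ast(t))_{t\in\mathcal T},(e_i^\ast(t))_{t\in\mathcal T})$ is a maximizer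 of $\phi(\mathbf x_i(N);\theta_i)+\sum_{t=0}^{N-1}\big(f(\mathbf x_i(t),\mathbf u_i(t);\theta_i)+\lambda^\ast_t e_i(t)\big)$ over all inputs $\mathbf u_i(t)\in\mathbb R^m$ and trades $e_i(t)\in\mathbb R$ subject to the dynamics and $e_i(t)\le a_i(t)-h_i(\mathbf u_i(t))$ for all $t\in\mathcal T$; and (ii) $\sum_{i=1}^ne_i^\ast(t)=0$ for all $t\in\mathcal T$. *)

theory Defs
  imports "HOL-Analysis.Analysis"
begin

definition sym_pd :: "real^'k^'k \<Rightarrow> bool" where
  "sym_pd M \<longleftrightarrow> transpose M = M \<and> (\<forall>x. x \<noteq> 0 \<longrightarrow> x \<bullet> (M *v x) > 0)"

definition mat_opnorm :: "real^'k^'l \<Rightarrow> real" where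
  "mat_opnorm M = onorm (\<lambda>x. M *v x)"

fun traj :: "real^'d \<Rightarrow> real^'d^'d \<Rightarrow> real^'m^'d \<Rightarrow> (nat \<Rightarrow> real^'m) \<Rightarrow> nat \<Rightarrow> real^'d" where
  "traj x0 A B u 0 = x0"
| "traj x0 A B u (Suc t) = A *v traj x0 A B u t + B *v u t"

definition f_run :: "real^'d \<Rightarrow> real^'m \<Rightarrow> real^'d^'d \<Rightarrow> real^'m^'m \<Rightarrow> real" where
  "f_run x u Q R = - (x \<bullet> (Q *v x)) - (u \<bullet> (R *v u))"

definition phi_term :: "real^'d \<Rightarrow> real^'d^'d \<Rightarrow> real" where
  "phi_term x Q = - (x \<bullet> (Q *v x))"

definition consump :: "real^'m^'m \<Rightarrow> real^'m \<Rightarrow> real" where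
  "consump H u = u \<bullet> (H *v u)"

definition agent_obj ::
  "nat \<Rightarrow> real^'d \<Rightarrow> real^'d^'d \<Rightarrow> real^'m^'d \<Rightarrow> real^'d^'d \<Rightarrow> real^'m^'m
   \<Rightarrow> (nat \<Rightarrow> real) \<Rightarrow> (nat \<Rightarrow> real^'m) \<Rightarrow> (nat \<Rightarrow> real) \<Rightarrow> real" where
  "agent_obj N x0 A B Q R lam u e =
     phi_term (traj x0 A B u N) Q
     + (\<Sum>t<N. f_run (traj x0 A B u t) (u t) Q R + lam t * e t)"

definition agent_feasible ::
  "nat \<Rightarrow> real^'m^'m \<Rightarrow> (nat \<Rightarrow> real) \<Rightarrow> (nat \<Rightarrow> real^'m) \<Rightarrow> (nat \<Rightarrow> real) \<Rightarrow> bool" where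
  "agent_feasible N H a u e \<longleftrightarrow> (\<forall>t<N. e t \<le> a t - consump H (u t))"

(* competitive equilibrium; agents indexed 0..n-1, times 0..N-1 *)
definition competitive_equilibrium ::
  "nat \<Rightarrow> nat \<Rightarrow> (nat \<Rightarrow> real^'d) \<Rightarrow> (nat \<Rightarrow> real^'d^'d) \<Rightarrow> (nat \<Rightarrow> real^'m^'d)
   \<Rightarrow> (nat \<Rightarrow> real^'d^'d) \<Rightarrow> (nat \<Rightarrow> real^'m^'m) \<Rightarrow> (nat \<Rightarrow> real^'m^'m)
   \<Rightarrow> (nat \<Rightarrow> nat \<Rightarrow> real)
   \<Rightarrow> (nat \<Rightarrow> real) \<Rightarrow> (nat \<Rightarrow> nat \<Rightarrow> real^'m) \<Rightarrow> (nat \<Rightarrow> nat \<Rightarrow> real) \<Rightarrow> bool" where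
  "competitive_equilibrium n N x0 A B Q R H a lam U E \<longleftrightarrow>
     (\<forall>i<n. agent_feasible N (H i) (a i) (U i) (E i) \<and>
        (\<forall>u e. agent_feasible N (H i) (a i) u e \<longrightarrow>
           agent_obj N (x0 i) (A i) (B i) (Q i) (R i) lam u e
             \<le> agent_obj N (x0 i) (A i) (B i) (Q i) (R i) lam (U i) (E i)))
     \<and> (\<forall>t<N. (\<Sum>i<n. E i t) = 0)"

end

theory Submission
  imports Defs
begin

text \<open>
  Each agent's input minimises the quadratic cost
  \<open>\<Sum>\<^sub>t x\<^sup>TQx + \<Sum>\<^sub>t (u\<^sup>TRu + \<lambda>\<^sub>t u\<^sup>THu)\<close>, and \<open>\<lambda>\<^sub>t \<ge> 0\<close> with the budget tight whenever
  \<open>\<lambda>\<^sub>t > 0\<close>. Perturbing the minimiser along its input at time \<open>k\<close> alone, and along all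
  its inputs from time \<open>k\<close> on, and applying Cauchy--Schwarz in the \<open>Q\<close>-inner product
  bounds the stage cost \<open>\<lambda>\<^sub>k u\<^sub>k\<^sup>THu\<^sub>k\<close> by the geometric mean of the future state cost
  of the free response after \<open>k\<close> and that of the impulse response to \<open>u\<^sub>k\<close>. Both are
  controlled by \<open>\<parallel>Q\<parallel> \<le> \<delta>\<^sub>m\<^sub>a\<^sub>x\<close>, the operator norm bounds and the a priori bound
  \<open>\<parallel>u\<^sub>j\<parallel> \<le> \<surd>(C(j)/\<rho>)\<close> coming from market clearing. If \<open>\<lambda>\<^sub>k > 0\<close>, all budgets at time
  \<open>k\<close> are tight, so some agent consumes at least \<open>C(k)/n\<close>, and for that agent the
  bound turns into \<open>\<lambda>\<^sub>k \<le> \<lambda>\<^sup>\<dagger>\<close>.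
\<close>

definition quad_form :: "real^'k^'k \<Rightarrow> real^'k \<Rightarrow> real" where
  "quad_form M v = v \<bullet> (M *v v)"

definition sym_psd :: "real^'k^'k \<Rightarrow> bool" where
  "sym_psd M \<longleftrightarrow> transpose M = M \<and> (\<forall>v. 0 \<le> quad_form M v)"

lemma sym_pd_imp_sym_psd: "sym_pd M \<Longrightarrow> sym_psd M"
  unfolding sym_pd_def sym_psd_def quad_form_def
  by (metis inner_zero_left matrix_vector_mult_0_right order_le_less)

lemma consump_eq_quad_form: "consump H v = quad_form H v"
  unfolding consump_def quad_form_def ..

lemma sym_matrix_inner_commute:
  "transpose M = M \<Longrightarrow> x \<bullet> (M *v y) = y \<bullet> (M *v (x::real^'n))"
  by (metis dot_lmul_matrix inner_commute vector_transpose_matrix)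

lemma quad_form_diff:
  assumes "transpose M = M"
  shows "quad_form M (p - s *\<^sub>R q) = quad_form M p - 2 * s * (q \<bullet> (M *v p)) + s\<^sup>2 * quad_form M q"
  using sym_matrix_inner_commute[OF assms, of p q]
  by (simp add: quad_form_def matrix_vector_mult_diff_distrib matrix_vector_mult_scaleR
      inner_diff_left inner_diff_right algebra_simps power2_eq_square)

lemma quad_form_uminus [simp]: "quad_form M (- v) = quad_form M v"
  using matrix_vector_mult_diff_distrib[of M 0 v] by (simp add: quad_form_def)

lemma norm_matrix_vector_le: "mat_opnorm M \<le> c \<Longrightarrow> norm (M *v v) \<le> c * norm v"
proof -
  assume "mat_opnorm M \<le> c"
  moreover have "norm (M *v v) \<le> mat_opnorm M * norm v"
    unfolding mat_opnorm_def using onorm[OF matrix_vector_mul_bounded_linear] by blast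
  ultimately show ?thesis by (smt (verit) mult_right_mono norm_ge_zero)
qed

lemma mat_opnorm_nonneg: "0 \<le> mat_opnorm M"
  unfolding mat_opnorm_def by (rule onorm_pos_le[OF matrix_vector_mul_bounded_linear])

lemma quad_form_le_opnorm: "mat_opnorm M \<le> d \<Longrightarrow> quad_form M v \<le> d * (norm v)\<^sup>2"
proof -
  assume h: "mat_opnorm M \<le> d"
  have "quad_form M v \<le> norm v * norm (M *v v)"
    unfolding quad_form_def by (smt (verit) norm_cauchy_schwarz)
  also have "\<dots> \<le> norm v * (d * norm v)"
    by (rule mult_left_mono[OF norm_matrix_vector_le[OF h]]) simp
  finally show ?thesis by (simp add: power2_eq_square algebra_simps)
qed

lemma sum_inner_quad_form_le:
  assumes "sym_psd M"
  shows "(\<Sum>t\<in>T. f t \<bullet> (M *v g t))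
    \<le> sqrt (\<Sum>t\<in>T. quad_form M (f t)) * sqrt (\<Sum>t\<in>T. quad_form M (g t))"
proof -
  have sym: "transpose M = M" and psd: "\<And>v. 0 \<le> quad_form M v"
    using assms by (auto simp: sym_psd_def)
  define F where "F = (\<Sum>t\<in>T. quad_form M (f t))"
  define G where "G = (\<Sum>t\<in>T. quad_form M (g t))"
  define P where "P = (\<Sum>t\<in>T. f t \<bullet> (M *v g t))"
  have F: "0 \<le> F" and G: "0 \<le> G" unfolding F_def G_def by (simp_all add: psd sum_nonneg)
  have discr: "0 \<le> F - 2 * r * P + r\<^sup>2 * G" for r
  proof -
    have "0 \<le> (\<Sum>t\<in>T. quad_form M (f t - r *\<^sub>R g t))" by (simp add: psd sum_nonneg)
    also have "\<dots> = F - 2 * r * P + r\<^sup>2 * G"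
      unfolding F_def G_def P_def quad_form_diff[OF sym] using sym_matrix_inner_commute[OF sym]
      by (simp add: sum.distrib sum_subtractf sum_distrib_left)
    finally show ?thesis .
  qed
  have "P \<le> sqrt F * sqrt G"
  proof (cases "G = 0")
    case True
    have "P \<le> 0"
    proof (rule ccontr)
      assume "\<not> P \<le> 0"
      with discr[of "(F + 1) / (2 * P)"] True show False by (simp add: field_simps)
    qed
    then show ?thesis by (simp add: F G order_trans[OF _ mult_nonneg_nonneg])
  next
    case False
    then have "0 < G" using G by simp
    from discr[of "P / G"] this have "P\<^sup>2 \<le> F * G"
      by (simp add: power2_eq_square field_simps)
    then show ?thesis by (metis real_sqrt_le_mono real_sqrt_abs real_sqrt_mult abs_ge_self order_trans)
  qed
  then show ?thesis unfolding F_def G_def P_def .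
qed

lemma traj_add:
  "traj (x1 + x2) A B (\<lambda>j. u1 j + u2 j) t = traj x1 A B u1 t + traj x2 A B u2 t"
  by (induction t) (simp_all add: matrix_vector_right_distrib algebra_simps)

lemma traj_diff_scaleR:
  "traj x A B (\<lambda>j. u j - c *\<^sub>R v j) t = traj x A B u t - c *\<^sub>R traj 0 A B v t"
proof (induction t)
  case (Suc t)
  show ?case
    by (simp only: traj.simps Suc.IH)
      (simp add: matrix_vector_mult_diff_distrib matrix_vector_mult_scaleR
        matrix_vector_right_distrib algebra_simps)
qed simp

lemma traj_zero_input: "(\<forall>j<t. v j = 0) \<Longrightarrow> traj 0 A B v t = 0"
  by (induction t) simp_all

lemma traj_cong: "(\<forall>j<t. u j = u' j) \<Longrightarrow> traj x A B u t = traj x A B u' t"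
  by (induction t) simp_all

lemma norm_traj_le:
  assumes "norm x0 \<le> g" and A: "mat_opnorm A \<le> al" and "0 \<le> al"
    and B: "mat_opnorm B \<le> be" and "0 \<le> be"
    and "\<forall>j<t. norm (u j) \<le> s j"
  shows "norm (traj x0 A B u t) \<le> g * al ^ t + be * (\<Sum>j<t. al ^ (t - 1 - j) * s j)"
  using assms(6)
proof (induction t)
  case 0
  then show ?case using assms(1) by simp
next
  case (Suc t)
  have "norm (traj x0 A B u (Suc t)) \<le> al * norm (traj x0 A B u t) + be * norm (u t)"
    using norm_matrix_vector_le[OF A] norm_matrix_vector_le[OF B]
    by (smt (verit) norm_triangle_ineq traj.simps(2))
  also have "\<dots> \<le> al * (g * al ^ t + be * (\<Sum>j<t. al ^ (t - 1 - j) * s j)) + be * s t"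
    using Suc assms(3,5) by (intro add_mono mult_left_mono) auto
  also have "\<dots> = g * al ^ Suc t + be * ((\<Sum>j<t. al ^ Suc (t - 1 - j) * s j) + s t)"
    by (simp add: sum_distrib_left algebra_simps)
  also have "(\<Sum>j<t. al ^ Suc (t - 1 - j) * s j) = (\<Sum>j<t. al ^ (Suc t - 1 - j) * s j)"
    by (intro sum.cong) (auto simp: Suc_diff_Suc)
  finally show ?case by simp
qed

lemma norm_traj_free_le:
  assumes A: "mat_opnorm A \<le> al" and "0 \<le> al" and "\<forall>j\<ge>k. v j = 0"
  shows "norm (traj x0 A B v (k + s)) \<le> al ^ s * norm (traj x0 A B v k)"
proof (induction s)
  case (Suc s)
  have "norm (traj x0 A B v (k + Suc s)) \<le> al * norm (traj x0 A B v (k + s))"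
    using assms(3) norm_matrix_vector_le[OF A] by simp
  also have "\<dots> \<le> al * (al ^ s * norm (traj x0 A B v k))"
    using Suc assms(2) by (rule mult_left_mono)
  finally show ?case by simp
qed simp

lemma norm_traj_impulse_le:
  assumes A: "mat_opnorm A \<le> al" and "0 \<le> al" and B: "mat_opnorm B \<le> be"
  shows "norm (traj 0 A B (\<lambda>j. if j = k then w else 0) (Suc k + s)) \<le> al ^ s * (be * norm w)"
proof (induction s)
  case 0
  have "traj 0 A B (\<lambda>j. if j = k then w else 0) k = 0" by (rule traj_zero_input) auto
  then show ?case using norm_matrix_vector_le[OF B, of w] by simp
next
  case (Suc s)
  have "norm (traj 0 A B (\<lambda>j. if j = k then w else 0) (Suc k + Suc s))
      \<le> al * norm (traj 0 A B (\<lambda>j. if j = k then w else 0) (Suc k + s))"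
    using norm_matrix_vector_le[OF A] by simp
  also have "\<dots> \<le> al * (al ^ s * (be * norm w))"
    using Suc assms(2) by (rule mult_left_mono)
  finally show ?case by simp
qed

definition agent_cost ::
  "nat \<Rightarrow> real^'d \<Rightarrow> real^'d^'d \<Rightarrow> real^'m^'d \<Rightarrow> real^'d^'d \<Rightarrow> real^'m^'m \<Rightarrow> real^'m^'m
   \<Rightarrow> (nat \<Rightarrow> real) \<Rightarrow> (nat \<Rightarrow> real^'m) \<Rightarrow> real" where
  "agent_cost N x0 A B Q R H lam u =
     (\<Sum>t\<le>N. quad_form Q (traj x0 A B u t))
     + (\<Sum>t<N. quad_form R (u t) + lam t * quad_form H (u t))"

definition agent_cost_deriv ::
  "nat \<Rightarrow> real^'d \<Rightarrow> real^'d^'d \<Rightarrow> real^'m^'d \<Rightarrow> real^'d^'d \<Rightarrow> real^'m^'m \<Rightarrow> real^'m^'m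
   \<Rightarrow> (nat \<Rightarrow> real) \<Rightarrow> (nat \<Rightarrow> real^'m) \<Rightarrow> (nat \<Rightarrow> real^'m) \<Rightarrow> real" where
  "agent_cost_deriv N x0 A B Q R H lam u v =
     (\<Sum>t\<le>N. traj 0 A B v t \<bullet> (Q *v traj x0 A B u t))
     + (\<Sum>t<N. v t \<bullet> (R *v u t) + lam t * (v t \<bullet> (H *v u t)))"

definition agent_optimal ::
  "nat \<Rightarrow> real^'d \<Rightarrow> real^'d^'d \<Rightarrow> real^'m^'d \<Rightarrow> real^'d^'d \<Rightarrow> real^'m^'m \<Rightarrow> real^'m^'m
   \<Rightarrow> (nat \<Rightarrow> real) \<Rightarrow> (nat \<Rightarrow> real) \<Rightarrow> (nat \<Rightarrow> real^'m) \<Rightarrow> (nat \<Rightarrow> real) \<Rightarrow> bool" where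
  "agent_optimal N x0 A B Q R H a lam u e \<longleftrightarrow>
     agent_feasible N H a u e \<and>
     (\<forall>u' e'. agent_feasible N H a u' e' \<longrightarrow>
        agent_obj N x0 A B Q R lam u' e' \<le> agent_obj N x0 A B Q R lam u e)"

lemma competitive_equilibrium_iff:
  "competitive_equilibrium n N x0 A B Q R H a lam U E \<longleftrightarrow>
     (\<forall>i<n. agent_optimal N (x0 i) (A i) (B i) (Q i) (R i) (H i) (a i) lam (U i) (E i))
     \<and> (\<forall>t<N. (\<Sum>i<n. E i t) = 0)"
  unfolding competitive_equilibrium_def agent_optimal_def by blast

lemma agent_obj_eq_neg_cost:
  "agent_obj N x0 A B Q R lam u e =
     (\<Sum>t<N. lam t * (e t + consump H (u t))) - agent_cost N x0 A B Q R H lam u"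
  unfolding agent_obj_def agent_cost_def phi_term_def f_run_def consump_def quad_form_def
  by (simp add: lessThan_Suc_atMost[symmetric] sum.distrib sum_subtractf algebra_simps)

text \<open>Shifting the trade by the change in consumption keeps the revenue term fixed.\<close>
lemma agent_optimal_minimizes_cost:
  assumes "agent_optimal N x0 A B Q R H a lam u e"
  shows "agent_cost N x0 A B Q R H lam u \<le> agent_cost N x0 A B Q R H lam u'"
proof -
  define e' where "e' = (\<lambda>t. e t + consump H (u t) - consump H (u' t))"
  have "agent_feasible N H a u' e'"
    using assms unfolding agent_optimal_def agent_feasible_def e'_def by auto
  then have "agent_obj N x0 A B Q R lam u' e' \<le> agent_obj N x0 A B Q R lam u e"
    using assms unfolding agent_optimal_def by blast
  then show ?thesis by (simp add: agent_obj_eq_neg_cost[where H = H] e'_def)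
qed

lemma agent_optimal_price_nonneg:
  assumes "agent_optimal N x0 A B Q R H a lam u e" and "j < N"
  shows "0 \<le> lam j"
proof -
  define e' where "e' = e(j := e j - 1)"
  have "agent_feasible N H a u e'"
    using assms unfolding agent_optimal_def agent_feasible_def e'_def by auto
  then have "agent_obj N x0 A B Q R lam u e' \<le> agent_obj N x0 A B Q R lam u e"
    using assms unfolding agent_optimal_def by blast
  moreover have "(\<Sum>t<N. lam t * e' t) = (\<Sum>t<N. lam t * e t) - lam j"
    using assms(2) by (simp add: e'_def sum.remove[of "{..<N}" j] algebra_simps)
  ultimately show ?thesis by (simp add: agent_obj_def sum.distrib)
qed

lemma agent_optimal_budget_tight:
  assumes opt: "agent_optimal N x0 A B Q R H a lam u e" and "j < N" and "0 < lam j"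
  shows "e j = a j - consump H (u j)"
proof (rule ccontr)
  define s where "s = a j - consump H (u j) - e j"
  assume "e j \<noteq> a j - consump H (u j)"
  then have "0 < s" using opt \<open>j < N\<close> unfolding agent_optimal_def agent_feasible_def s_def by force
  define e' where "e' = e(j := e j + s)"
  have "agent_feasible N H a u e'"
    using opt unfolding agent_optimal_def agent_feasible_def e'_def s_def by auto
  then have "agent_obj N x0 A B Q R lam u e' \<le> agent_obj N x0 A B Q R lam u e"
    using opt unfolding agent_optimal_def by blast
  moreover have "(\<Sum>t<N. lam t * e' t) = (\<Sum>t<N. lam t * e t) + lam j * s"
    using \<open>j < N\<close> by (simp add: e'_def sum.remove[of "{..<N}" j] algebra_simps)
  ultimately have "lam j * s \<le> 0" by (simp add: agent_obj_def sum.distrib)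
  with \<open>0 < s\<close> \<open>0 < lam j\<close> show False by (simp add: mult_le_0_iff)
qed

lemma agent_cost_perturb:
  assumes "transpose Q = Q" "transpose R = R" "transpose H = H"
  shows "agent_cost N x0 A B Q R H lam (\<lambda>j. u j - s *\<^sub>R v j)
    = agent_cost N x0 A B Q R H lam u - 2 * s * agent_cost_deriv N x0 A B Q R H lam u v
      + s\<^sup>2 * agent_cost N 0 A B Q R H lam v"
  unfolding agent_cost_def agent_cost_deriv_def traj_diff_scaleR
    quad_form_diff[OF assms(1)] quad_form_diff[OF assms(2)] quad_form_diff[OF assms(3)]
  by (simp add: sum.distrib sum_subtractf sum_distrib_left algebra_simps)

lemma linear_nonpos_of_quadratic_nonneg:
  fixes L K :: real
  assumes "\<forall>s>0. 0 \<le> - 2 * s * L + s\<^sup>2 * K"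
  shows "L \<le> 0"
proof (rule ccontr)
  assume "\<not> L \<le> 0"
  define s where "s = L / (\<bar>K\<bar> + 1)"
  have "0 < s" using \<open>\<not> L \<le> 0\<close> by (simp add: s_def)
  moreover have "s * K < L"
  proof -
    have "s * K \<le> s * \<bar>K\<bar>" using \<open>0 < s\<close> by (simp add: mult_left_mono)
    also have "\<dots> = L * (\<bar>K\<bar> / (\<bar>K\<bar> + 1))" by (simp add: s_def)
    also have "\<dots> < L" using \<open>\<not> L \<le> 0\<close> by (simp add: mult_less_cancel_left1 divide_less_eq)
    finally show ?thesis .
  qed
  ultimately have "- 2 * s * L + s\<^sup>2 * K < 0"
    using \<open>\<not> L \<le> 0\<close> by (simp add: power2_eq_square algebra_simps mult_pos_neg)
  with assms \<open>0 < s\<close> show False by fastforce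
qed

lemma agent_cost_deriv_nonpos:
  assumes "sym_psd Q" "sym_psd R" "sym_psd H"
    and "\<forall>u'. agent_cost N x0 A B Q R H lam u \<le> agent_cost N x0 A B Q R H lam u'"
  shows "agent_cost_deriv N x0 A B Q R H lam u v \<le> 0"
  using assms(4)[rule_format, of "\<lambda>j. u j - _ *\<^sub>R v j"]
    agent_cost_perturb[of Q R H] assms(1-3)
  by (intro linear_nonpos_of_quadratic_nonneg) (fastforce simp: sym_psd_def)

lemma le_mult_of_sqrt_bounds:
  fixes c s a b :: real
  assumes "c \<le> s * b" and "c \<le> s * a - s\<^sup>2" and "0 \<le> s" "0 \<le> a" "0 \<le> b"
  shows "c \<le> a * b"
proof (cases "s \<le> a")
  case True
  then show ?thesis using assms by (smt (verit) mult_right_mono)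
next
  case False
  then have "s * a - s\<^sup>2 \<le> 0"
    using assms(3) by (simp add: power2_eq_square mult_left_mono)
  then show ?thesis using assms by (smt (verit) mult_nonneg_nonneg)
qed

lemma sum_atMost_eq_sum_tail:
  "(\<And>t. t \<le> k \<Longrightarrow> g t = 0) \<Longrightarrow> (\<Sum>t\<le>N. g t) = (\<Sum>t\<in>{Suc k..N}. g t)"
  by (rule sum.mono_neutral_right) auto

lemma cost_minimizer_impulse_foc:
  assumes Q: "sym_psd Q" and R: "sym_psd R" and H: "sym_psd H"
    and min: "\<forall>u'. agent_cost N x0 A B Q R H lam u \<le> agent_cost N x0 A B Q R H lam u'"
    and k: "k < N"
  shows "quad_form R (u k) + lam k * quad_form H (u k)
    \<le> - (\<Sum>t\<in>{Suc k..N}. traj 0 A B (\<lambda>j. if j = k then u k else 0) t \<bullet> (Q *v traj x0 A B u t))"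
proof -
  define now where "now = (\<lambda>j. if j = k then u k else 0)"
  have "(\<Sum>t<N. now t \<bullet> (R *v u t) + lam t * (now t \<bullet> (H *v u t)))
      = (\<Sum>t<N. if t = k then quad_form R (u k) + lam k * quad_form H (u k) else 0)"
    by (rule sum.cong) (auto simp: now_def quad_form_def)
  also have "\<dots> = quad_form R (u k) + lam k * quad_form H (u k)" using k by simp
  moreover have "traj 0 A B now t = 0" if "t \<le> k" for t
    using that by (auto intro!: traj_zero_input simp: now_def)
  ultimately show ?thesis
    using agent_cost_deriv_nonpos[OF Q R H min, of now]
      sum_atMost_eq_sum_tail[of k "\<lambda>t. traj 0 A B now t \<bullet> (Q *v traj x0 A B u t)" N]
    by (simp add: agent_cost_deriv_def now_def)
qed

lemma cost_minimizer_tail_foc: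
  assumes Q: "sym_psd Q" and R: "sym_psd R" and H: "sym_psd H"
    and min: "\<forall>u'. agent_cost N x0 A B Q R H lam u \<le> agent_cost N x0 A B Q R H lam u'"
    and k: "k < N" and lam: "\<forall>j<N. 0 \<le> lam j"
  shows "quad_form R (u k) + lam k * quad_form H (u k)
    \<le> (\<Sum>t\<in>{Suc k..N}. traj x0 A B (\<lambda>j. if j < k then u j else 0) t \<bullet> (Q *v traj x0 A B u t))
      - (\<Sum>t\<in>{Suc k..N}. quad_form Q (traj x0 A B u t))"
proof -
  define past where "past = (\<lambda>j. if j < k then u j else 0)"
  define rest where "rest = (\<lambda>j. if k \<le> j then u j else 0)"
  define f where "f t = (if k \<le> t then quad_form R (u t) + lam t * quad_form H (u t) else 0)" for t
  have "quad_form R (u k) + lam k * quad_form H (u k) \<le> (\<Sum>t<N. f t)"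
    using member_le_sum[of k "{..<N}" f] k lam R H by (simp add: f_def sym_psd_def)
  also have "\<dots> = (\<Sum>t<N. rest t \<bullet> (R *v u t) + lam t * (rest t \<bullet> (H *v u t)))"
    by (rule sum.cong) (auto simp: f_def rest_def quad_form_def)
  moreover have "traj 0 A B rest t = traj x0 A B u t - traj x0 A B past t" for t
  proof -
    have "u = (\<lambda>j. past j + rest j)" by (auto simp: past_def rest_def)
    then show ?thesis using traj_add[of x0 0 A B past rest t] by simp
  qed
  moreover have "traj 0 A B rest t = 0" if "t \<le> k" for t
    using that by (auto intro!: traj_zero_input simp: rest_def)
  ultimately show ?thesis
    using agent_cost_deriv_nonpos[OF Q R H min, of rest]
      sum_atMost_eq_sum_tail[of k "\<lambda>t. traj 0 A B rest t \<bullet> (Q *v traj x0 A B u t)" N]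
    by (simp add: agent_cost_deriv_def past_def quad_form_def inner_diff_left sum_subtractf)
qed

text \<open>
  With \<open>X\<close> the future state cost of \<open>u\<close> itself, the two first-order conditions give
  \<open>c \<le> \<surd>X\<surd>Z\<close> and \<open>c \<le> \<surd>X\<surd>Y - X\<close>, which together force \<open>c \<le> \<surd>Y\<surd>Z\<close>.
\<close>
lemma cost_minimizer_stage_cost_le:
  fixes u :: "nat \<Rightarrow> real^'m" and x0 :: "real^'d"
  assumes Q: "sym_psd Q" and R: "sym_psd R" and H: "sym_psd H"
    and min: "\<forall>u'. agent_cost N x0 A B Q R H lam u \<le> agent_cost N x0 A B Q R H lam u'"
    and k: "k < N" and lam: "\<forall>j<N. 0 \<le> lam j"
  shows "quad_form R (u k) + lam k * quad_form H (u k)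
    \<le> sqrt (\<Sum>t\<in>{Suc k..N}. quad_form Q (traj x0 A B (\<lambda>j. if j < k then u j else 0) t))
      * sqrt (\<Sum>t\<in>{Suc k..N}. quad_form Q (traj 0 A B (\<lambda>j. if j = k then u k else 0) t))"
    (is "?c \<le> sqrt ?Y * sqrt ?Z")
proof -
  define X where "X = (\<Sum>t\<in>{Suc k..N}. quad_form Q (traj x0 A B u t))"
  have "?c \<le> sqrt ?Z * sqrt X"
    using cost_minimizer_impulse_foc[OF Q R H min k]
      sum_inner_quad_form_le[OF Q, where f = "\<lambda>t. - traj 0 A B (\<lambda>j. if j = k then u k else 0) t"
        and g = "traj x0 A B u" and T = "{Suc k..N}"]
    by (simp add: X_def sum_negf)
  moreover have "?c \<le> sqrt ?Y * sqrt X - X"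
    using cost_minimizer_tail_foc[OF Q R H min k lam]
      sum_inner_quad_form_le[OF Q, where f = "traj x0 A B (\<lambda>j. if j < k then u j else 0)"
        and g = "traj x0 A B u" and T = "{Suc k..N}"]
    by (simp add: X_def)
  moreover have "0 \<le> X" "0 \<le> ?Y" "0 \<le> ?Z" using Q by (simp_all add: X_def sym_psd_def sum_nonneg)
  ultimately show ?thesis
    using le_mult_of_sqrt_bounds[of ?c "sqrt X" "sqrt ?Z" "sqrt ?Y"] real_sqrt_pow2[of X]
    by (simp add: mult.commute)
qed

lemma tail_energy_free_le:
  assumes A: "mat_opnorm A \<le> al" and al: "0 \<le> al" and Q: "mat_opnorm Q \<le> d"
    and v: "\<forall>j\<ge>k. v j = 0"
  shows "(\<Sum>t\<in>{Suc k..N}. quad_form Q (traj x A B v t))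
    \<le> d * (norm (traj x A B v k))\<^sup>2 * al * (\<Sum>t\<in>{Suc k..N}. al ^ (2 * t - 2 * k - 1))"
proof -
  have d: "0 \<le> d" using Q mat_opnorm_nonneg order_trans by blast
  have "quad_form Q (traj x A B v t)
      \<le> d * (norm (traj x A B v k))\<^sup>2 * al * al ^ (2 * t - 2 * k - 1)"
    if t: "t \<in> {Suc k..N}" for t
  proof -
    define s where "s = t - k"
    have ts: "t = k + s" using t by (simp add: s_def)
    have "norm (traj x A B v t) \<le> al ^ (t - k) * norm (traj x A B v k)"
      using norm_traj_free_le[OF A al v, of x B s] by (simp only: ts diff_add_inverse)
    then have "(norm (traj x A B v t))\<^sup>2 \<le> (al ^ (t - k) * norm (traj x A B v k))\<^sup>2"
      by (rule power_mono) simp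
    then have "quad_form Q (traj x A B v t) \<le> d * (al ^ (t - k) * norm (traj x A B v k))\<^sup>2"
      using quad_form_le_opnorm[OF Q] d by (meson mult_left_mono order_trans)
    moreover have "(al ^ (t - k))\<^sup>2 = al * al ^ (2 * t - 2 * k - 1)"
    proof -
      have "(t - k) * 2 = Suc (2 * t - 2 * k - 1)" using t by auto
      then show ?thesis by (metis power_mult power_Suc)
    qed
    ultimately show ?thesis by (simp add: power_mult_distrib algebra_simps)
  qed
  then have "(\<Sum>t\<in>{Suc k..N}. quad_form Q (traj x A B v t))
      \<le> (\<Sum>t\<in>{Suc k..N}. d * (norm (traj x A B v k))\<^sup>2 * al * al ^ (2 * t - 2 * k - 1))"
    by (rule sum_mono)
  then show ?thesis by (simp add: sum_distrib_left)
qed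

lemma tail_energy_impulse_le:
  assumes A: "mat_opnorm A \<le> al" and al: "0 \<le> al" and B: "mat_opnorm B \<le> be"
    and Q: "mat_opnorm Q \<le> d"
  shows "al * (\<Sum>t\<in>{Suc k..N}. quad_form Q (traj 0 A B (\<lambda>j. if j = k then w else 0) t))
    \<le> d * be\<^sup>2 * (norm w)\<^sup>2 * (\<Sum>t\<in>{Suc k..N}. al ^ (2 * t - 2 * k - 1))"
proof -
  have d: "0 \<le> d" using Q mat_opnorm_nonneg order_trans by blast
  have "al * quad_form Q (traj 0 A B (\<lambda>j. if j = k then w else 0) t)
      \<le> d * be\<^sup>2 * (norm w)\<^sup>2 * al ^ (2 * t - 2 * k - 1)"
    if t: "t \<in> {Suc k..N}" for t
  proof -
    define s where "s = t - Suc k"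
    have ts: "t = Suc k + s" using t by (simp add: s_def)
    have pow: "al * (al ^ (t - Suc k))\<^sup>2 = al ^ (2 * t - 2 * k - 1)"
    proof -
      have "Suc ((t - Suc k) * 2) = 2 * t - 2 * k - 1" using t by auto
      then show ?thesis by (metis power_mult power_Suc)
    qed
    have "norm (traj 0 A B (\<lambda>j. if j = k then w else 0) t) \<le> al ^ (t - Suc k) * (be * norm w)"
      using norm_traj_impulse_le[OF A al B, of k w s] by (simp only: ts diff_add_inverse)
    then have "(norm (traj 0 A B (\<lambda>j. if j = k then w else 0) t))\<^sup>2
        \<le> (al ^ (t - Suc k) * (be * norm w))\<^sup>2"
      by (rule power_mono) simp
    then have "quad_form Q (traj 0 A B (\<lambda>j. if j = k then w else 0) t)
        \<le> d * (al ^ (t - Suc k) * (be * norm w))\<^sup>2"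
      using quad_form_le_opnorm[OF Q] d by (meson mult_left_mono order_trans)
    then have "al * quad_form Q (traj 0 A B (\<lambda>j. if j = k then w else 0) t)
        \<le> al * (d * (al ^ (t - Suc k) * (be * norm w))\<^sup>2)"
      using al by (rule mult_left_mono)
    also have "\<dots> = d * be\<^sup>2 * (norm w)\<^sup>2 * (al * (al ^ (t - Suc k))\<^sup>2)"
      by (simp only: power_mult_distrib ac_simps)
    also have "\<dots> = d * be\<^sup>2 * (norm w)\<^sup>2 * al ^ (2 * t - 2 * k - 1)"
      by (simp only: pow)
    finally show ?thesis .
  qed
  then have "(\<Sum>t\<in>{Suc k..N}. al * quad_form Q (traj 0 A B (\<lambda>j. if j = k then w else 0) t))
      \<le> (\<Sum>t\<in>{Suc k..N}. d * be\<^sup>2 * (norm w)\<^sup>2 * al ^ (2 * t - 2 * k - 1))"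
    by (rule sum_mono)
  then show ?thesis by (simp add: sum_distrib_left)
qed

lemma cost_minimizer_stage_cost_le_opnorm:
  fixes u :: "nat \<Rightarrow> real^'m" and x0 :: "real^'d"
  assumes Q: "sym_psd Q" and R: "sym_psd R" and H: "sym_psd H"
    and min: "\<forall>u'. agent_cost N x0 A B Q R H lam u \<le> agent_cost N x0 A B Q R H lam u'"
    and k: "k < N" and lam: "\<forall>j<N. 0 \<le> lam j"
    and A: "mat_opnorm A \<le> al" and al: "0 \<le> al" and B: "mat_opnorm B \<le> be" and be: "0 \<le> be"
    and Qd: "mat_opnorm Q \<le> d"
  shows "quad_form R (u k) + lam k * quad_form H (u k)
    \<le> d * be * norm (u k) * norm (traj x0 A B u k) * (\<Sum>t\<in>{Suc k..N}. al ^ (2 * t - 2 * k - 1))"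
proof -
  define S where "S = (\<Sum>t\<in>{Suc k..N}. al ^ (2 * t - 2 * k - 1))"
  define Y where "Y = (\<Sum>t\<in>{Suc k..N}. quad_form Q (traj x0 A B (\<lambda>j. if j < k then u j else 0) t))"
  define Z where "Z = (\<Sum>t\<in>{Suc k..N}. quad_form Q (traj 0 A B (\<lambda>j. if j = k then u k else 0) t))"
  have d: "0 \<le> d" using Qd mat_opnorm_nonneg order_trans by blast
  have S: "0 \<le> S" unfolding S_def using al by (simp add: sum_nonneg)
  have "0 \<le> Z" using Q by (simp add: Z_def sym_psd_def sum_nonneg)
  have "traj x0 A B (\<lambda>j. if j < k then u j else 0) k = traj x0 A B u k"
    by (rule traj_cong) simp
  then have "Y \<le> d * (norm (traj x0 A B u k))\<^sup>2 * al * S"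
    using tail_energy_free_le[OF A al Qd, where v = "\<lambda>j. if j < k then u j else 0" and k = k and N = N and x = x0 and B = B]
    by (simp add: Y_def S_def)
  then have "Y * Z \<le> (d * (norm (traj x0 A B u k))\<^sup>2 * al * S) * Z"
    using \<open>0 \<le> Z\<close> by (rule mult_right_mono)
  also have "\<dots> = (d * (norm (traj x0 A B u k))\<^sup>2 * S) * (al * Z)"
    by (simp only: ac_simps)
  also have "\<dots> \<le> (d * (norm (traj x0 A B u k))\<^sup>2 * S) * (d * be\<^sup>2 * (norm (u k))\<^sup>2 * S)"
    using tail_energy_impulse_le[OF A al B Qd, of k "u k" N] d S
    by (intro mult_left_mono) (simp_all add: Z_def S_def)
  also have "\<dots> = (d * be * norm (u k) * norm (traj x0 A B u k) * S)\<^sup>2"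
    by (simp add: power2_eq_square algebra_simps)
  finally have "sqrt (Y * Z) \<le> \<bar>d * be * norm (u k) * norm (traj x0 A B u k) * S\<bar>"
    by (metis real_sqrt_le_mono real_sqrt_abs)
  then have "sqrt Y * sqrt Z \<le> d * be * norm (u k) * norm (traj x0 A B u k) * S"
    using d be S by (simp add: real_sqrt_mult)
  then show ?thesis
    using cost_minimizer_stage_cost_le[OF Q R H min k lam] by (simp add: Y_def Z_def S_def)
qed

lemma tail_power_sum_mult_eq:
  fixes al g be :: real
  shows "(\<Sum>t\<in>{Suc k..N}. al ^ (2 * t - 2 * k - 1)) * (g * al ^ k + be * (\<Sum>j<k. al ^ (k - 1 - j) * s j))
    = (\<Sum>t=k+1..N. g * al ^ (2 * t - k - 1) + be * (\<Sum>j<k. s j * al ^ (2 * t - j - k - 2)))"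
proof -
  have "(\<Sum>t\<in>{Suc k..N}. al ^ (2 * t - 2 * k - 1)) * (g * al ^ k + be * (\<Sum>j<k. al ^ (k - 1 - j) * s j))
      = (\<Sum>t\<in>{Suc k..N}. g * (al ^ (2 * t - 2 * k - 1) * al ^ k)
          + be * (\<Sum>j<k. s j * (al ^ (2 * t - 2 * k - 1) * al ^ (k - 1 - j))))"
    by (simp add: sum_distrib_left sum_distrib_right sum.distrib algebra_simps)
  also have "\<dots> = (\<Sum>t=k+1..N. g * al ^ (2 * t - k - 1) + be * (\<Sum>j<k. s j * al ^ (2 * t - j - k - 2)))"
  proof (rule sum.cong)
    fix t assume t: "t \<in> {k + 1..N}"
    have "2 * t - 2 * k - 1 + k = 2 * t - k - 1" using t by auto
    moreover have "2 * t - 2 * k - 1 + (k - 1 - j) = 2 * t - j - k - 2" if "j < k" for j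
      using t that by auto
    ultimately
    show "g * (al ^ (2 * t - 2 * k - 1) * al ^ k)
          + be * (\<Sum>j<k. s j * (al ^ (2 * t - 2 * k - 1) * al ^ (k - 1 - j)))
        = g * al ^ (2 * t - k - 1) + be * (\<Sum>j<k. s j * al ^ (2 * t - j - k - 2))"
      by (simp add: power_add[symmetric])
  qed simp
  finally show ?thesis .
qed

lemma mult_sqrt_div_le_of_bounds:
  fixes nu h c rho :: real and n :: nat
  assumes "rho * nu\<^sup>2 \<le> h" and "c / n \<le> h" and "1 \<le> n" and "0 \<le> nu" "0 \<le> c" "0 \<le> rho"
  shows "nu * sqrt (c * rho) / n \<le> h"
proof -
  have h: "0 \<le> h" using assms(1,6) by (smt (verit) mult_nonneg_nonneg zero_le_power2)
  have "c \<le> n * h" using assms(2,3) by (simp add: field_simps)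
  have "nu * sqrt (c * rho) = sqrt (c * (rho * nu\<^sup>2))"
    using assms(4) by (simp add: real_sqrt_mult)
  also have "\<dots> \<le> sqrt ((n * h) * h)"
    using assms(1,5,6) \<open>c \<le> n * h\<close> h by (intro real_sqrt_le_mono mult_mono) auto
  also have "\<dots> = sqrt n * h" using h by (simp add: real_sqrt_mult)
  also have "\<dots> \<le> n * h"
    using assms(3) h by (intro mult_right_mono real_le_lsqrt) (auto simp: power2_eq_square)
  finally show ?thesis using assms(3) by (simp add: field_simps)
qed

lemma agent_optimal_price_le:
  fixes u :: "nat \<Rightarrow> real^'m" and x0 :: "real^'d" and n :: nat
  assumes opt: "agent_optimal N x0 A B Q R H a lam u e"
    and Q: "sym_psd Q" and Qd: "mat_opnorm Q \<le> d" and R: "sym_psd R" and H: "sym_psd H"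
    and x0: "norm x0 \<le> g" and A: "mat_opnorm A \<le> al" and al: "0 \<le> al"
    and B: "mat_opnorm B \<le> be" and be: "0 < be"
    and rho: "0 < rho" and H_rho: "\<forall>v. rho * (v \<bullet> v) \<le> consump H v"
    and k: "k < N" and past: "\<forall>j<k. norm (u j) \<le> s j"
    and n: "1 \<le> n" and c: "0 < c" and share: "c / n \<le> consump H (u k)"
    and cond: "d * (\<Sum>t=k+1..N. g * al ^ (2 * t - k - 1)
        + be * (\<Sum>j<k. s j * al ^ (2 * t - j - k - 2))) \<le> sqrt (c * rho) / (real n * be) * lamdag"
    and lamdag: "0 \<le> lamdag"
  shows "lam k \<le> lamdag"
proof -
  define h where "h = consump H (u k)"
  define S where "S = (\<Sum>t\<in>{Suc k..N}. al ^ (2 * t - 2 * k - 1))"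
  define bound where "bound = (\<Sum>t=k+1..N. g * al ^ (2 * t - k - 1)
        + be * (\<Sum>j<k. s j * al ^ (2 * t - j - k - 2)))"
  have d: "0 \<le> d" using Qd mat_opnorm_nonneg order_trans by blast
  have "0 < c / n" using c n by simp
  then have "0 < h" using share by (simp add: h_def)
  have "0 \<le> S" unfolding S_def using al by (simp add: sum_nonneg)
  have "lam k * h \<le> quad_form R (u k) + lam k * quad_form H (u k)"
    using R by (simp add: h_def consump_eq_quad_form sym_psd_def)
  also have "\<dots> \<le> d * be * norm (u k) * (S * norm (traj x0 A B u k))"
    using cost_minimizer_stage_cost_le_opnorm[OF Q R H _ k _ A al B _ Qd]
      agent_optimal_minimizes_cost[OF opt] agent_optimal_price_nonneg[OF opt] be
    by (simp add: S_def ac_simps)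
  also have "\<dots> \<le> d * be * norm (u k) * bound"
  proof -
    have "S * norm (traj x0 A B u k) \<le> S * (g * al ^ k + be * (\<Sum>j<k. al ^ (k - 1 - j) * s j))"
      using norm_traj_le[OF x0 A al B _ past] be \<open>0 \<le> S\<close> by (simp add: mult_left_mono)
    also have "\<dots> = bound" unfolding S_def bound_def by (rule tail_power_sum_mult_eq)
    finally show ?thesis using d be by (intro mult_left_mono) simp_all
  qed
  also have "\<dots> = be * norm (u k) * (d * bound)" by (simp only: ac_simps)
  also have "\<dots> \<le> be * norm (u k) * (sqrt (c * rho) / (real n * be) * lamdag)"
    using cond be unfolding bound_def by (intro mult_left_mono) simp_all
  also have "\<dots> = norm (u k) * sqrt (c * rho) / n * lamdag" using be by (simp add: field_simps)
  also have "\<dots> \<le> h * lamdag"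
  proof (rule mult_right_mono[OF mult_sqrt_div_le_of_bounds lamdag])
    show "rho * (norm (u k))\<^sup>2 \<le> h"
      using H_rho by (simp add: h_def power2_norm_eq_inner)
  qed (use share n c rho in \<open>simp_all add: h_def\<close>)
  finally have "lam k * h \<le> lamdag * h" by (simp only: ac_simps)
  then show ?thesis using \<open>0 < h\<close> by simp
qed

lemma exists_ge_average:
  fixes f :: "nat \<Rightarrow> real"
  assumes "n \<noteq> 0"
  shows "\<exists>i<n. (\<Sum>j<n. f j) / n \<le> f i"
proof (rule ccontr)
  assume "\<not> ?thesis"
  then have "(\<Sum>i<n. f i) < (\<Sum>i<n. (\<Sum>j<n. f j) / n)"
    using assms by (intro sum_strict_mono) (auto simp: not_le)
  then show False using assms by simp
qed

lemma market_consumption_le_supply: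
  fixes n :: nat
  assumes "\<forall>i<n. agent_feasible N (H i) (a i) (U i) (E i)" and "(\<Sum>i<n. E i t) = 0" and "t < N"
  shows "(\<Sum>i<n. consump (H i) (U i t)) \<le> (\<Sum>i<n. a i t)"
proof -
  have "(\<Sum>i<n. E i t) \<le> (\<Sum>i<n. a i t - consump (H i) (U i t))"
    using assms(1,3) unfolding agent_feasible_def by (intro sum_mono) auto
  then show ?thesis using assms(2) by (simp add: sum_subtractf)
qed

lemma market_input_norm_le:
  fixes n :: nat
  assumes total: "(\<Sum>l<n. consump (H l) (U l t)) \<le> c"
    and rho: "0 < rho" and H_rho: "\<forall>l<n. \<forall>v. rho * (v \<bullet> v) \<le> consump (H l) v"
    and i: "i < n"
  shows "norm (U i t) \<le> sqrt (c / rho)"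
proof -
  have "rho * (norm (U i t))\<^sup>2 \<le> consump (H i) (U i t)"
    using H_rho i by (simp add: power2_norm_eq_inner)
  also have "\<dots> \<le> (\<Sum>l<n. consump (H l) (U l t))"
  proof (rule member_le_sum)
    show "0 \<le> consump (H l) (U l t)" if "l \<in> {..<n} - {i}" for l
      using H_rho that rho by (meson lessThan_iff DiffD1 inner_ge_zero mult_nonneg_nonneg
          less_imp_le order_trans)
  qed (use i in auto)
  also have "\<dots> \<le> c" by (rule total)
  finally show ?thesis using rho by (intro real_le_rsqrt) (simp add: field_simps)
qed

lemma competitive_equilibrium_input_norm_le:
  fixes n :: nat
  assumes ce: "competitive_equilibrium n N x0 A B Q R H a lam U E"
    and rho: "0 < rho" and H_rho: "\<forall>l<n. \<forall>v. rho * (v \<bullet> v) \<le> consump (H l) v"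
    and "i < n" and "j < N"
  shows "norm (U i j) \<le> sqrt ((\<Sum>l<n. a l j) / rho)"
proof -
  have "(\<Sum>l<n. consump (H l) (U l j)) \<le> (\<Sum>l<n. a l j)"
    using ce \<open>j < N\<close>
    by (intro market_consumption_le_supply) (auto simp: competitive_equilibrium_def)
  then show ?thesis by (rule market_input_norm_le[OF _ rho H_rho \<open>i < n\<close>])
qed

text \<open>A positive price makes every budget tight, so the whole supply is consumed.\<close>
lemma competitive_equilibrium_exists_large_consumer:
  fixes n :: nat
  assumes ce: "competitive_equilibrium n N x0 A B Q R H a lam U E"
    and "k < N" and "0 < lam k" and pos: "0 < (\<Sum>l<n. a l k)"
  shows "\<exists>i<n. (\<Sum>l<n. a l k) / n \<le> consump (H i) (U i k)"
proof -
  have "\<forall>i<n. E i k = a i k - consump (H i) (U i k)"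
    using ce \<open>k < N\<close> \<open>0 < lam k\<close>
    by (auto simp: competitive_equilibrium_iff intro: agent_optimal_budget_tight)
  moreover have "(\<Sum>i<n. E i k) = 0" using ce \<open>k < N\<close> by (simp add: competitive_equilibrium_def)
  ultimately have "(\<Sum>i<n. consump (H i) (U i k)) = (\<Sum>l<n. a l k)"
    by (simp add: sum_subtractf)
  moreover have "n \<noteq> 0" using pos by (intro notI) simp
  ultimately show ?thesis using exists_ge_average[of n "\<lambda>i. consump (H i) (U i k)"] by simp
qed

theorem theorem3:
  fixes n N :: nat
    and x0 :: "nat \<Rightarrow> real^'d"
    and A :: "nat \<Rightarrow> real^'d^'d"
    and B :: "nat \<Rightarrow> real^'m^'d"
    and H :: "nat \<Rightarrow> real^'m^'m"
    and a :: "nat \<Rightarrow> nat \<Rightarrow> real"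
    and gam alph bet rho lamdag deltamax :: real
    and Q :: "nat \<Rightarrow> real^'d^'d"
    and R :: "nat \<Rightarrow> real^'m^'m"
    and lam :: "nat \<Rightarrow> real"
    and U :: "nat \<Rightarrow> nat \<Rightarrow> real^'m"
    and E :: "nat \<Rightarrow> nat \<Rightarrow> real"
  defines "C \<equiv> (\<lambda>t. \<Sum>i<n. a i t)"
  assumes hN: "N \<ge> 1"
    and hpos: "gam > 0" "alph > 0" "bet > 0" "rho > 0"
    and hx0: "\<forall>i<n. norm (x0 i) \<le> gam"
    and hA: "\<forall>i<n. mat_opnorm (A i) \<le> alph"
    and hB: "\<forall>i<n. mat_opnorm (B i) \<le> bet"
    and hHpd: "\<forall>i<n. sym_pd (H i)"
    and hHrho: "\<forall>i<n. \<forall>v. v \<bullet> (H i *v v) \<ge> rho * (v \<bullet> v)"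
    and hC: "\<forall>t<N. C t > 0"
    and hlam: "lamdag > 0"
    and hdelta: "deltamax > 0"
    and hcond0: "deltamax * (\<Sum>t=1..N. gam * alph ^ (2*t - 1))
                   \<le> sqrt (C 0 * rho) / (real n * bet) * lamdag"
    and hcondk: "\<forall>k<N. k \<noteq> 0 \<longrightarrow>
          deltamax * (\<Sum>t=k+1..N. gam * alph ^ (2*t - k - 1)
              + bet * (\<Sum>j<k. sqrt (C j / rho) * alph ^ (2*t - j - k - 2)))
          \<le> sqrt (C k * rho) / (real n * bet) * lamdag"
    and hQ: "\<forall>i<n. sym_pd (Q i) \<and> mat_opnorm (Q i) \<le> deltamax"
    and hR: "\<forall>i<n. sym_pd (R i)"
    and hCE: "competitive_equilibrium n N x0 A B Q R H a lam U E"
  shows "\<forall>t<N. lam t \<le> lamdag"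
proof (intro allI impI)
  fix k assume k: "k < N"
  have H_rho: "\<forall>i<n. \<forall>v. rho * (v \<bullet> v) \<le> consump (H i) v"
    using hHrho by (simp add: consump_def)
  show "lam k \<le> lamdag"
  proof (cases "lam k \<le> 0")
    case True
    with hlam show ?thesis by simp
  next
    case False
    then obtain i where i: "i < n" and share: "C k / n \<le> consump (H i) (U i k)"
      using competitive_equilibrium_exists_large_consumer[OF hCE k] hC k by (force simp: C_def)
    have past: "\<forall>j<k. norm (U i j) \<le> sqrt (C j / rho)"
      using competitive_equilibrium_input_norm_le[OF hCE hpos(4) H_rho i] k by (simp add: C_def)
    have cond: "deltamax * (\<Sum>t=k+1..N. gam * alph ^ (2 * t - k - 1)
        + bet * (\<Sum>j<k. sqrt (C j / rho) * alph ^ (2 * t - j - k - 2)))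
        \<le> sqrt (C k * rho) / (real n * bet) * lamdag"
      using hcond0 hcondk k by (cases "k = 0") auto
    from hCE i have "agent_optimal N (x0 i) (A i) (B i) (Q i) (R i) (H i) (a i) lam (U i) (E i)"
      by (simp add: competitive_equilibrium_iff)
    then show ?thesis
      by (rule agent_optimal_price_le[OF _ _ _ _ _ _ _ _ _ _ hpos(4) _ k past _ _ share cond])
        (use hQ hR hHpd hx0 hA hB H_rho hpos hC k i hlam in \<open>auto simp: sym_pd_imp_sym_psd\<close>)
  qed
qed

end
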